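(* Let $n<\omega$, let $L\in\mathbf{M}_n$ and let $P$ be its dual $pm$-space. Then $L$ is simple if and only if $P=Q\cup\zeta(Q)$ for some order component $Q$ of $P$.
   Context: $\mathbf{M}_n$ is the variety of regular pseudocomplemented de Morgan algebras of range $n$: algebras $(L;\wedge,\vee,{}^\ast,{}^\prime,0,1)$ with bounded distributive lattice reduct, pseudocomplement ${}^\ast$, de Morgan involution ${}^\prime$, satisfying $x\wedge x^{\prime\ast\prime}\le y\vee y^\ast$ and $(x\wedge x^{\prime\ast})^{n(\prime\ast)}=(x\wedge x^{\prime\ast})^{(n+1)(\prime\ast)}$, where $x^{0(\prime\ast)}=x$, $x^{(k+1)(\prime\ast)}=((x^{k(\prime\ast)})')^\ast$. Simple algebras are non-trivial. The dual $pm$-space is the Priestley space $(P;\tau,\le)$ of prime ideals with involution $\zeta(I)=\{a:a'\notin I\}$. An order component of $P$ is a maximal subset any two elements of which are joined by a finite path in the comparability graph of $(P;\le)$. *)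

theory Defs
  imports Main
begin

text \<open>An algebra (L; meet, join, pseudocomplement, de Morgan negation, 0, 1).
  The carrier is the whole type 'a.\<close>
record 'a pmalg =
  meet :: "'a \<Rightarrow> 'a \<Rightarrow> 'a"
  join :: "'a \<Rightarrow> 'a \<Rightarrow> 'a"
  pc   :: "'a \<Rightarrow> 'a"
  neg  :: "'a \<Rightarrow> 'a"
  bot  :: 'a
  top  :: 'a

definition leq :: "'a pmalg \<Rightarrow> 'a \<Rightarrow> 'a \<Rightarrow> bool" where
  "leq A x y \<longleftrightarrow> meet A x y = x"

definition bdl :: "'a pmalg \<Rightarrow> bool" where
  "bdl A \<longleftrightarrow>
     (\<forall>x y z. meet A x (meet A y z) = meet A (meet A x y) z) \<and>
     (\<forall>x y z. join A x (join A y z) = join A (join A x y) z) \<and>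
     (\<forall>x y. meet A x y = meet A y x) \<and>
     (\<forall>x y. join A x y = join A y x) \<and>
     (\<forall>x y. meet A x (join A x y) = x) \<and>
     (\<forall>x y. join A x (meet A x y) = x) \<and>
     (\<forall>x y z. meet A x (join A y z) = join A (meet A x y) (meet A x z)) \<and>
     (\<forall>x. meet A x (bot A) = bot A) \<and>
     (\<forall>x. join A x (top A) = top A)"

definition is_pseudocomplemented :: "'a pmalg \<Rightarrow> bool" where
  "is_pseudocomplemented A \<longleftrightarrow> (\<forall>x y. meet A x y = bot A \<longleftrightarrow> leq A y (pc A x))"

definition is_de_morgan :: "'a pmalg \<Rightarrow> bool" where
  "is_de_morgan A \<longleftrightarrow>
     (\<forall>x. neg A (neg A x) = x) \<and>
     (\<forall>x y. neg A (meet A x y) = join A (neg A x) (neg A y)) \<and>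
     (\<forall>x y. neg A (join A x y) = meet A (neg A x) (neg A y)) \<and>
     neg A (bot A) = top A \<and> neg A (top A) = bot A"

definition iter_np :: "'a pmalg \<Rightarrow> nat \<Rightarrow> 'a \<Rightarrow> 'a" where
  "iter_np A k x = ((\<lambda>z. pc A (neg A z)) ^^ k) x"

definition in_M :: "nat \<Rightarrow> 'a pmalg \<Rightarrow> bool" where
  "in_M n A \<longleftrightarrow> bdl A \<and> is_pseudocomplemented A \<and> is_de_morgan A \<and>
     (\<forall>x y. leq A (meet A x (neg A (pc A (neg A x)))) (join A y (pc A y))) \<and>
     (\<forall>x. iter_np A n (meet A x (pc A (neg A x)))
          = iter_np A (Suc n) (meet A x (pc A (neg A x))))"

definition congruence :: "'a pmalg \<Rightarrow> ('a \<Rightarrow> 'a \<Rightarrow> bool) \<Rightarrow> bool" where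
  "congruence A \<theta> \<longleftrightarrow> equivp \<theta> \<and>
     (\<forall>x y u v. \<theta> x y \<and> \<theta> u v \<longrightarrow> \<theta> (meet A x u) (meet A y v)) \<and>
     (\<forall>x y u v. \<theta> x y \<and> \<theta> u v \<longrightarrow> \<theta> (join A x u) (join A y v)) \<and>
     (\<forall>x y. \<theta> x y \<longrightarrow> \<theta> (pc A x) (pc A y)) \<and>
     (\<forall>x y. \<theta> x y \<longrightarrow> \<theta> (neg A x) (neg A y))"

definition simple_alg :: "'a pmalg \<Rightarrow> bool" where
  "simple_alg A \<longleftrightarrow> (\<exists>x y::'a. x \<noteq> y) \<and>
     (\<forall>\<theta>. congruence A \<theta> \<longrightarrow> \<theta> = (=) \<or> \<theta> = (\<lambda>_ _. True))"

definition prime_ideal :: "'a pmalg \<Rightarrow> 'a set \<Rightarrow> bool" where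
  "prime_ideal A I \<longleftrightarrow> bot A \<in> I \<and> top A \<notin> I \<and>
     (\<forall>x y. x \<in> I \<and> leq A y x \<longrightarrow> y \<in> I) \<and>
     (\<forall>x y. x \<in> I \<and> y \<in> I \<longrightarrow> join A x y \<in> I) \<and>
     (\<forall>x y. meet A x y \<in> I \<longrightarrow> x \<in> I \<or> y \<in> I)"

text \<open>Underlying ordered set of the dual pm-space: prime ideals ordered by inclusion.\<close>
definition dual_space :: "'a pmalg \<Rightarrow> 'a set set" where
  "dual_space A = {I. prime_ideal A I}"

definition zeta :: "'a pmalg \<Rightarrow> 'a set \<Rightarrow> 'a set" where
  "zeta A I = {a. neg A a \<notin> I}"

definition comparable_in :: "'b set set \<Rightarrow> 'b set \<Rightarrow> 'b set \<Rightarrow> bool" where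
  "comparable_in P I J \<longleftrightarrow> I \<in> P \<and> J \<in> P \<and> (I \<subseteq> J \<or> J \<subseteq> I)"

definition path_connected_set :: "'b set set \<Rightarrow> 'b set set \<Rightarrow> bool" where
  "path_connected_set P Q \<longleftrightarrow> (\<forall>I\<in>Q. \<forall>J\<in>Q. (comparable_in P)\<^sup>*\<^sup>* I J)"

definition order_component :: "'b set set \<Rightarrow> 'b set set \<Rightarrow> bool" where
  "order_component P Q \<longleftrightarrow> Q \<noteq> {} \<and> Q \<subseteq> P \<and> path_connected_set P Q \<and>
     (\<forall>R. Q \<subseteq> R \<and> R \<subseteq> P \<and> path_connected_set P R \<longrightarrow> R = Q)"

end

theory Submission
  imports Defs
begin

text \<open>A congruence \<open>\<theta>\<close> is determined by the prime ideals that are unions of \<open>\<theta>\<close>-classes,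
  and it is the identity as soon as every prime ideal is such a union. In a regular algebra the
  prime ideals form no chains of length three, which makes this family closed under
  comparability, and it is always closed under \<open>zeta\<close>. So if \<open>P = Q \<union> zeta ` Q\<close> for an order
  component \<open>Q\<close>, a congruence not collapsing \<open>0\<close> and \<open>1\<close> saturates one prime ideal, hence all
  of them, and is trivial.

  Conversely, fix a prime ideal \<open>I\<close> and let \<open>E\<^sub>k\<close> consist of the prime ideals containing the
  image of \<open>I\<close> under the \<open>k\<close>-th iterate of \<open>x \<mapsto> x'\<^sup>*\<close>. Every member of \<open>E\<^sub>k\<^sub>+\<^sub>1\<close> is the image
  under \<open>zeta\<close> of a prime ideal comparable with a member of \<open>E\<^sub>k\<close>, so by induction the members
  of \<open>E\<^sub>k\<close> lie in \<open>Q \<union> zeta ` Q\<close>, where \<open>Q\<close> is the order component of \<open>I\<close>. The range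
  identity makes \<open>E\<^sub>n \<union> E\<^sub>n\<^sub>+\<^sub>1\<close> closed under \<open>zeta\<close> and under passing to smaller prime ideals,
  so it induces a congruence; in a simple algebra this congruence is the identity, which forces
  every prime ideal into \<open>E\<^sub>n \<union> E\<^sub>n\<^sub>+\<^sub>1\<close>.\<close>

section \<open>Order components\<close>

lemma comparable_rtranclp_closed:
  assumes "(comparable_in P)\<^sup>*\<^sup>* I K" "I \<in> P" shows "K \<in> P"
  using assms by (induction rule: rtranclp_induct) (auto simp: comparable_in_def)

lemma order_component_of:
  assumes "I \<in> P"
  shows "order_component P {K. (comparable_in P)\<^sup>*\<^sup>* I K}" (is "order_component P ?C")
  unfolding order_component_def path_connected_set_def
proof (intro conjI allI impI ballI)
  show "?C \<noteq> {}" by blast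
  show "?C \<subseteq> P" using comparable_rtranclp_closed assms by blast
  have "symp (comparable_in P)" unfolding comparable_in_def by (auto intro: sympI)
  then have sym: "symp (comparable_in P)\<^sup>*\<^sup>*" by (rule symp_rtranclp)
  fix J K assume "J \<in> ?C" "K \<in> ?C"
  then have "(comparable_in P)\<^sup>*\<^sup>* J I" "(comparable_in P)\<^sup>*\<^sup>* I K" using sympD[OF sym] by auto
  then show "(comparable_in P)\<^sup>*\<^sup>* J K" by (rule rtranclp_trans)
next
  fix R assume R: "?C \<subseteq> R \<and> R \<subseteq> P \<and> (\<forall>J\<in>R. \<forall>K\<in>R. (comparable_in P)\<^sup>*\<^sup>* J K)"
  moreover have "I \<in> R" using R by blast
  ultimately show "R = ?C" by blast
qed

section \<open>Pseudocomplemented de Morgan algebras\<close>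

locale pm_algebra =
  fixes L :: "'a pmalg"
  assumes bdl: "bdl L" and pseudocomplemented: "is_pseudocomplemented L"
    and de_morgan: "is_de_morgan L"
begin

abbreviation meet_syn (infixl "\<sqinter>" 70) where "x \<sqinter> y \<equiv> meet L x y"
abbreviation join_syn (infixl "\<squnion>" 65) where "x \<squnion> y \<equiv> join L x y"
abbreviation leq_syn (infix "\<sqsubseteq>" 50) where "x \<sqsubseteq> y \<equiv> leq L x y"
abbreviation bot_syn ("\<bottom>") where "\<bottom> \<equiv> bot L"
abbreviation top_syn ("\<top>") where "\<top> \<equiv> top L"

lemma meet_assoc: "x \<sqinter> (y \<sqinter> z) = x \<sqinter> y \<sqinter> z"
  and join_assoc: "x \<squnion> (y \<squnion> z) = x \<squnion> y \<squnion> z"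
  and meet_commute: "x \<sqinter> y = y \<sqinter> x"
  and join_commute: "x \<squnion> y = y \<squnion> x"
  and meet_absorb: "x \<sqinter> (x \<squnion> y) = x"
  and join_absorb: "x \<squnion> (x \<sqinter> y) = x"
  and meet_join_distrib: "x \<sqinter> (y \<squnion> z) = x \<sqinter> y \<squnion> x \<sqinter> z"
  and meet_bot: "x \<sqinter> \<bottom> = \<bottom>"
  and join_top: "x \<squnion> \<top> = \<top>"
  using bdl unfolding bdl_def by blast+

lemma leq_iff_join: "x \<sqsubseteq> y \<longleftrightarrow> x \<squnion> y = y"
  unfolding leq_def by (metis meet_absorb join_absorb meet_commute join_commute)

sublocale lat: distrib_lattice "meet L" "leq L" "\<lambda>x y. x \<sqsubseteq> y \<and> \<not> y \<sqsubseteq> x" "join L"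
proof
  show "x \<sqsubseteq> x" for x by (metis leq_def meet_absorb join_absorb)
  show "x \<sqsubseteq> y \<Longrightarrow> y \<sqsubseteq> z \<Longrightarrow> x \<sqsubseteq> z" for x y z by (metis leq_def meet_assoc)
  show "x \<sqsubseteq> y \<Longrightarrow> y \<sqsubseteq> x \<Longrightarrow> x = y" for x y by (metis leq_def meet_commute)
  show "x \<sqinter> y \<sqsubseteq> x" for x y
    by (metis leq_def meet_assoc meet_commute meet_absorb join_absorb)
  show "x \<sqinter> y \<sqsubseteq> y" for x y by (metis leq_def meet_assoc meet_absorb join_absorb)
  show "x \<sqsubseteq> y \<Longrightarrow> x \<sqsubseteq> z \<Longrightarrow> x \<sqsubseteq> y \<sqinter> z" for x y z by (metis leq_def meet_assoc)
  show "x \<sqsubseteq> x \<squnion> y" for x y by (simp add: leq_def meet_absorb)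
  show "y \<sqsubseteq> x \<squnion> y" for x y by (metis leq_def meet_absorb join_commute)
  show "y \<sqsubseteq> x \<Longrightarrow> z \<sqsubseteq> x \<Longrightarrow> y \<squnion> z \<sqsubseteq> x" for x y z
    by (metis leq_iff_join join_assoc)
  show "x \<squnion> y \<sqinter> z = (x \<squnion> y) \<sqinter> (x \<squnion> z)" for x y z
    by (metis meet_join_distrib meet_commute meet_absorb join_assoc join_absorb join_commute)
qed simp

sublocale lat: bounded_lattice "meet L" "leq L" "\<lambda>x y. x \<sqsubseteq> y \<and> \<not> y \<sqsubseteq> x" "join L" \<bottom> \<top>
  by unfold_locales (metis leq_def meet_bot meet_commute, metis leq_iff_join join_top)

lemma le_pc_iff: "y \<sqsubseteq> pc L x \<longleftrightarrow> x \<sqinter> y = \<bottom>"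
  using pseudocomplemented unfolding is_pseudocomplemented_def by blast

lemma meet_pc [simp]: "x \<sqinter> pc L x = \<bottom>"
  using le_pc_iff by blast

lemma pc_antimono:
  assumes "x \<sqsubseteq> y" shows "pc L y \<sqsubseteq> pc L x"
proof -
  have "x \<sqinter> pc L y = x \<sqinter> y \<sqinter> pc L y" using assms by (simp add: lat.inf.absorb1)
  also have "\<dots> = \<bottom>" by (simp add: lat.inf_assoc)
  finally show ?thesis by (simp add: le_pc_iff)
qed

lemma pc_join: "pc L (x \<squnion> y) = pc L x \<sqinter> pc L y"
proof (rule lat.order.antisym)
  show "pc L (x \<squnion> y) \<sqsubseteq> pc L x \<sqinter> pc L y" by (simp add: pc_antimono)
  have "x \<sqinter> (pc L x \<sqinter> pc L y) = \<bottom>" "y \<sqinter> (pc L x \<sqinter> pc L y) = \<bottom>"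
    by (simp_all add: lat.inf_assoc[symmetric])
      (metis lat.inf_left_commute lat.inf_assoc meet_pc lat.inf_bot_right)
  then have "(x \<squnion> y) \<sqinter> (pc L x \<sqinter> pc L y) = \<bottom>" by (simp add: lat.inf_sup_distrib2)
  then show "pc L x \<sqinter> pc L y \<sqsubseteq> pc L (x \<squnion> y)" by (simp add: le_pc_iff)
qed

lemma pc_bot [simp]: "pc L \<bottom> = \<top>"
  by (metis lat.top_unique le_pc_iff lat.inf_bot_left)

lemma neg_neg [simp]: "neg L (neg L x) = x"
  and neg_meet: "neg L (x \<sqinter> y) = neg L x \<squnion> neg L y"
  and neg_join: "neg L (x \<squnion> y) = neg L x \<sqinter> neg L y"
  and neg_bot [simp]: "neg L \<bottom> = \<top>"
  and neg_top [simp]: "neg L \<top> = \<bottom>"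
  using de_morgan unfolding is_de_morgan_def by blast+

lemma neg_antimono:
  assumes "x \<sqsubseteq> y" shows "neg L y \<sqsubseteq> neg L x"
proof -
  have "neg L x = neg L x \<squnion> neg L y" using assms by (metis lat.inf.absorb_iff1 neg_meet)
  then show ?thesis by (metis lat.sup.absorb_iff1)
qed

lemma iter_np_0 [simp]: "iter_np L 0 x = x"
  by (simp add: iter_np_def)

lemma iter_np_Suc: "iter_np L (Suc k) x = pc L (neg L (iter_np L k x))"
  by (simp add: iter_np_def)

lemma iter_np_Suc': "iter_np L (Suc k) x = iter_np L k (pc L (neg L x))"
  by (simp add: iter_np_def funpow_Suc_right del: funpow.simps)

lemma iter_np_mono: "x \<sqsubseteq> y \<Longrightarrow> iter_np L k x \<sqsubseteq> iter_np L k y"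
  by (induction k) (simp_all add: iter_np_Suc pc_antimono neg_antimono)

lemma iter_np_meet: "iter_np L k (x \<sqinter> y) = iter_np L k x \<sqinter> iter_np L k y"
  by (induction k) (simp_all add: iter_np_Suc neg_meet pc_join)

lemma join_neg_pc_neg [simp]: "x \<squnion> neg L (pc L (neg L x)) = \<top>"
  by (metis neg_neg neg_bot neg_join meet_pc)

lemma meet_joins_le: "(a \<squnion> x) \<sqinter> (b \<squnion> y) \<sqsubseteq> a \<squnion> b \<squnion> x \<sqinter> y"
proof -
  have "(a \<squnion> x) \<sqinter> (b \<squnion> y) \<sqsubseteq> (a \<squnion> b \<squnion> x) \<sqinter> (a \<squnion> b \<squnion> y)"
    by (intro lat.inf_mono lat.sup_mono) simp_all
  then show ?thesis by (simp add: lat.sup_inf_distrib1)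
qed

definition lattice_ideal :: "'a set \<Rightarrow> bool" where
  "lattice_ideal A \<longleftrightarrow> \<bottom> \<in> A \<and> (\<forall>x\<in>A. \<forall>y. y \<sqsubseteq> x \<longrightarrow> y \<in> A) \<and> (\<forall>x\<in>A. \<forall>y\<in>A. x \<squnion> y \<in> A)"

definition lattice_filter :: "'a set \<Rightarrow> bool" where
  "lattice_filter F \<longleftrightarrow> \<top> \<in> F \<and> (\<forall>x\<in>F. \<forall>y. x \<sqsubseteq> y \<longrightarrow> y \<in> F) \<and> (\<forall>x\<in>F. \<forall>y\<in>F. x \<sqinter> y \<in> F)"

definition lattice_congruence :: "('a \<Rightarrow> 'a \<Rightarrow> bool) \<Rightarrow> bool" where
  "lattice_congruence \<theta> \<longleftrightarrow> equivp \<theta> \<and>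
     (\<forall>x y u v. \<theta> x y \<and> \<theta> u v \<longrightarrow> \<theta> (x \<sqinter> u) (y \<sqinter> v)) \<and>
     (\<forall>x y u v. \<theta> x y \<and> \<theta> u v \<longrightarrow> \<theta> (x \<squnion> u) (y \<squnion> v))"

definition saturated :: "('a \<Rightarrow> 'a \<Rightarrow> bool) \<Rightarrow> 'a set \<Rightarrow> bool" where
  "saturated \<theta> A \<longleftrightarrow> (\<forall>x y. \<theta> x y \<longrightarrow> x \<in> A \<longrightarrow> y \<in> A)"

lemma lattice_congruence_eq: "lattice_congruence (=)"
  unfolding lattice_congruence_def by (simp add: identity_equivp)

lemma saturated_eq [simp]: "saturated (=) A"
  unfolding saturated_def by simp

lemma lattice_congruence_if_congruence: "congruence L \<theta> \<Longrightarrow> lattice_congruence \<theta>"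
  unfolding congruence_def lattice_congruence_def by blast

section \<open>Prime ideals saturated by a congruence\<close>

context
  fixes \<theta> assumes \<theta>: "lattice_congruence \<theta>"
begin

lemma cong_refl: "\<theta> x x"
  using \<theta> unfolding lattice_congruence_def by (meson equivp_reflp)

lemma cong_sym: "\<theta> x y \<Longrightarrow> \<theta> y x"
  using \<theta> unfolding lattice_congruence_def by (meson equivp_symp)

lemma cong_trans: "\<theta> x y \<Longrightarrow> \<theta> y z \<Longrightarrow> \<theta> x z"
  using \<theta> unfolding lattice_congruence_def by (meson equivp_transp)

lemma cong_meet: "\<theta> x y \<Longrightarrow> \<theta> u v \<Longrightarrow> \<theta> (x \<sqinter> u) (y \<sqinter> v)"
  using \<theta> unfolding lattice_congruence_def by blast

lemma cong_join: "\<theta> x y \<Longrightarrow> \<theta> u v \<Longrightarrow> \<theta> (x \<squnion> u) (y \<squnion> v)"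
  using \<theta> unfolding lattice_congruence_def by blast

lemma saturated_class: "saturated \<theta> {z. \<theta> z a}"
  unfolding saturated_def by (blast intro: cong_trans cong_sym)

text \<open>\<open>N\<close> is the \<open>\<theta>\<close>-saturated ideal generated by \<open>M\<close> and \<open>x\<close>: its members are the
  elements congruent to an element below some \<open>m \<squnion> x\<close> with \<open>m \<in> M\<close>.\<close>
lemma saturated_ideal_adjoin:
  fixes x assumes M: "lattice_ideal M"
  defines "N \<equiv> {z. \<exists>m\<in>M. \<theta> (z \<sqinter> (m \<squnion> x)) z}"
  shows "lattice_ideal N" and "saturated \<theta> N" and "M \<subseteq> N" and "x \<in> N"
proof -
  have M0: "\<bottom> \<in> M" and Mjoin: "\<And>a b. a \<in> M \<Longrightarrow> b \<in> M \<Longrightarrow> a \<squnion> b \<in> M"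
    using M unfolding lattice_ideal_def by auto
  show "M \<subseteq> N"
  proof
    fix z assume "z \<in> M"
    then show "z \<in> N" unfolding N_def by (intro CollectI bexI[of _ z]) (simp_all add: cong_refl)
  qed
  show "x \<in> N" unfolding N_def using M0 by (intro CollectI bexI[of _ \<bottom>]) (simp_all add: cong_refl)
  show "saturated \<theta> N" unfolding saturated_def
  proof (intro allI impI)
    fix z z' assume "\<theta> z z'" "z \<in> N"
    then obtain m where m: "m \<in> M" "\<theta> (z \<sqinter> (m \<squnion> x)) z" unfolding N_def by blast
    have "\<theta> (z' \<sqinter> (m \<squnion> x)) (z \<sqinter> (m \<squnion> x))"
      using \<open>\<theta> z z'\<close> by (intro cong_meet cong_refl) (rule cong_sym)
    then have "\<theta> (z' \<sqinter> (m \<squnion> x)) z'" using m(2) \<open>\<theta> z z'\<close> by (meson cong_trans)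
    then show "z' \<in> N" unfolding N_def using m(1) by blast
  qed
  have N_bigger: "\<theta> (z \<sqinter> c) z" if "\<theta> (z \<sqinter> (m \<squnion> x)) z" "m \<squnion> x \<sqsubseteq> c" for z m c
  proof -
    have "\<theta> (z \<sqinter> (m \<squnion> x) \<sqinter> c) (z \<sqinter> c)" using that(1) by (intro cong_meet cong_refl)
    then have "\<theta> (z \<sqinter> (m \<squnion> x)) (z \<sqinter> c)"
      using that(2) by (simp add: lat.inf_assoc lat.inf.absorb1)
    then show ?thesis using that(1) by (meson cong_trans cong_sym)
  qed
  show "lattice_ideal N" unfolding lattice_ideal_def
  proof (intro conjI ballI allI impI)
    show "\<bottom> \<in> N" using \<open>M \<subseteq> N\<close> M0 by blast
  next
    fix z y assume "z \<in> N" "y \<sqsubseteq> z"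
    then obtain m where "m \<in> M" "\<theta> (z \<sqinter> (m \<squnion> x)) z" unfolding N_def by blast
    then have "\<theta> (y \<sqinter> (z \<sqinter> (m \<squnion> x))) (y \<sqinter> z)" by (intro cong_meet cong_refl)
    then have "\<theta> (y \<sqinter> (m \<squnion> x)) y"
      using \<open>y \<sqsubseteq> z\<close> by (simp add: lat.inf_assoc[symmetric] lat.inf.absorb1)
    then show "y \<in> N" using \<open>m \<in> M\<close> unfolding N_def by blast
  next
    fix z1 z2 assume "z1 \<in> N" "z2 \<in> N"
    then obtain m1 m2 where m: "m1 \<in> M" "\<theta> (z1 \<sqinter> (m1 \<squnion> x)) z1"
      "m2 \<in> M" "\<theta> (z2 \<sqinter> (m2 \<squnion> x)) z2" unfolding N_def by blast
    let ?c = "(m1 \<squnion> m2) \<squnion> x"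
    have "m1 \<squnion> x \<sqsubseteq> ?c" "m2 \<squnion> x \<sqsubseteq> ?c"
      by (simp_all add: lat.le_supI1)
    then have "\<theta> (z1 \<sqinter> ?c \<squnion> z2 \<sqinter> ?c) (z1 \<squnion> z2)"
      using N_bigger[OF m(2)] N_bigger[OF m(4)] by (intro cong_join)
    then have "\<theta> ((z1 \<squnion> z2) \<sqinter> ?c) (z1 \<squnion> z2)" by (simp add: lat.inf_sup_distrib2)
    then show "z1 \<squnion> z2 \<in> N" using Mjoin[OF m(1,3)] unfolding N_def by blast
  qed
qed

lemma maximal_saturated_ideal_prime:
  assumes F: "lattice_filter F" "saturated \<theta> F"
    and M: "lattice_ideal M" "M \<inter> F = {}"
    and maximal: "\<And>N. lattice_ideal N \<Longrightarrow> saturated \<theta> N \<Longrightarrow> M \<subseteq> N \<Longrightarrow> N \<inter> F = {} \<Longrightarrow> N = M"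
  shows "prime_ideal L M"
proof -
  have F_up: "\<And>x y. x \<in> F \<Longrightarrow> x \<sqsubseteq> y \<Longrightarrow> y \<in> F" and F_meet: "\<And>x y. x \<in> F \<Longrightarrow> y \<in> F \<Longrightarrow> x \<sqinter> y \<in> F"
    using F(1) unfolding lattice_filter_def by auto
  have M_down: "\<And>x y. x \<in> M \<Longrightarrow> y \<sqsubseteq> x \<Longrightarrow> y \<in> M" and M_join: "\<And>x y. x \<in> M \<Longrightarrow> y \<in> M \<Longrightarrow> x \<squnion> y \<in> M"
    using M(1) unfolding lattice_ideal_def by auto
  have join_in_F: "\<exists>m\<in>M. m \<squnion> x \<in> F" if "x \<notin> M" for x
  proof -
    define N where "N = {z. \<exists>m\<in>M. \<theta> (z \<sqinter> (m \<squnion> x)) z}"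
    note N = saturated_ideal_adjoin[OF M(1), of x, folded N_def]
    have "N \<noteq> M" using N(4) that by blast
    then obtain z where "z \<in> N" "z \<in> F" using maximal N(1-3) by blast
    then obtain m where m: "m \<in> M" "\<theta> (z \<sqinter> (m \<squnion> x)) z" unfolding N_def by blast
    have "z \<sqinter> (m \<squnion> x) \<in> F" using F(2) \<open>z \<in> F\<close> cong_sym[OF m(2)] unfolding saturated_def by blast
    then show ?thesis using m(1) F_up lat.inf_le2 by blast
  qed
  show ?thesis unfolding prime_ideal_def
  proof (intro conjI allI impI)
    show "\<bottom> \<in> M" using M(1) unfolding lattice_ideal_def by blast
    show "\<top> \<notin> M" using F(1) M(2) unfolding lattice_filter_def by blast
  next
    fix x y assume "x \<in> M \<and> y \<sqsubseteq> x" then show "y \<in> M" using M_down by blast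
  next
    fix x y assume "x \<in> M \<and> y \<in> M" then show "x \<squnion> y \<in> M" using M_join by blast
  next
    fix x y assume xy: "x \<sqinter> y \<in> M"
    show "x \<in> M \<or> y \<in> M"
    proof (rule ccontr)
      assume "\<not> (x \<in> M \<or> y \<in> M)"
      then obtain m1 m2 where "m1 \<in> M" "m1 \<squnion> x \<in> F" "m2 \<in> M" "m2 \<squnion> y \<in> F"
        using join_in_F by blast
      then have "m1 \<squnion> m2 \<squnion> x \<sqinter> y \<in> F"
        using F_up[OF F_meet meet_joins_le] by blast
      moreover have "m1 \<squnion> m2 \<squnion> x \<sqinter> y \<in> M"
        using M_join \<open>m1 \<in> M\<close> \<open>m2 \<in> M\<close> xy by blast
      ultimately show False using M(2) by blast
    qed
  qed
qed

theorem saturated_prime_ideal_extension: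
  assumes A: "lattice_ideal A" "saturated \<theta> A" and F: "lattice_filter F" "saturated \<theta> F"
    and disjoint: "A \<inter> F = {}"
  obtains J where "prime_ideal L J" "A \<subseteq> J" "J \<inter> F = {}" "saturated \<theta> J"
proof -
  define \<A> where "\<A> = {J. lattice_ideal J \<and> saturated \<theta> J \<and> A \<subseteq> J \<and> J \<inter> F = {}}"
  have "\<Union>\<C> \<in> \<A>" if "\<C> \<noteq> {}" "subset.chain \<A> \<C>" for \<C>
  proof -
    have C: "\<C> \<subseteq> \<A>" and chain: "\<forall>X\<in>\<C>. \<forall>Y\<in>\<C>. X \<subseteq> Y \<or> Y \<subseteq> X"
      using that(2) unfolding subset.chain_def by auto
    have "lattice_ideal (\<Union>\<C>)" unfolding lattice_ideal_def
    proof (intro conjI ballI allI impI)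
      show "\<bottom> \<in> \<Union>\<C>" using that(1) C unfolding \<A>_def lattice_ideal_def by blast
    next
      fix x y assume "x \<in> \<Union>\<C>" "y \<sqsubseteq> x" then show "y \<in> \<Union>\<C>"
        using C unfolding \<A>_def lattice_ideal_def by blast
    next
      fix x y assume "x \<in> \<Union>\<C>" "y \<in> \<Union>\<C>"
      then obtain X Y where XY: "X \<in> \<C>" "Y \<in> \<C>" "x \<in> X" "y \<in> Y" by blast
      with chain have "X \<union> Y \<in> \<C>" by (metis sup.absorb1 sup.absorb2)
      with XY show "x \<squnion> y \<in> \<Union>\<C>" using C unfolding \<A>_def lattice_ideal_def by blast
    qed
    then show ?thesis using C that(1) unfolding \<A>_def saturated_def by blast
  qed
  moreover have "A \<in> \<A>" using A disjoint unfolding \<A>_def by blast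
  ultimately obtain M where M: "M \<in> \<A>" and maximal: "\<forall>X\<in>\<A>. M \<subseteq> X \<longrightarrow> X = M"
    using subset_Zorn_nonempty[of \<A>] by blast
  have "prime_ideal L M"
  proof (rule maximal_saturated_ideal_prime[OF F])
    show "lattice_ideal M" "M \<inter> F = {}" using M unfolding \<A>_def by auto
    fix N assume "lattice_ideal N" "saturated \<theta> N" "M \<subseteq> N" "N \<inter> F = {}"
    then show "N = M" using maximal M unfolding \<A>_def by blast
  qed
  with M show thesis using that unfolding \<A>_def by blast
qed

end

corollary prime_ideal_extension:
  assumes "lattice_ideal A" "lattice_filter F" "A \<inter> F = {}"
  obtains J where "prime_ideal L J" "A \<subseteq> J" "J \<inter> F = {}"
  using saturated_prime_ideal_extension[OF lattice_congruence_eq] assms by (metis saturated_eq)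

lemma lattice_ideal_principal: "lattice_ideal {z. z \<sqsubseteq> a}"
  unfolding lattice_ideal_def by (auto intro: lat.order.trans)

lemma lattice_filter_principal: "lattice_filter {z. a \<sqsubseteq> z}"
  unfolding lattice_filter_def by (auto intro: lat.order.trans)

lemma lattice_ideal_directed_join:
  assumes "A \<noteq> {}" and directed: "\<And>a b. a \<in> A \<Longrightarrow> b \<in> A \<Longrightarrow> \<exists>c\<in>A. a \<sqsubseteq> c \<and> b \<sqsubseteq> c"
    and B: "lattice_ideal B"
  shows "lattice_ideal {z. \<exists>a\<in>A. \<exists>b\<in>B. z \<sqsubseteq> a \<squnion> b}"
  unfolding lattice_ideal_def
proof (intro conjI ballI allI impI CollectI)
  show "\<exists>a\<in>A. \<exists>b\<in>B. \<bottom> \<sqsubseteq> a \<squnion> b" using assms(1) B unfolding lattice_ideal_def by auto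
next
  fix x y assume "x \<in> {z. \<exists>a\<in>A. \<exists>b\<in>B. z \<sqsubseteq> a \<squnion> b}" "y \<sqsubseteq> x"
  then show "\<exists>a\<in>A. \<exists>b\<in>B. y \<sqsubseteq> a \<squnion> b" by (blast intro: lat.order.trans)
next
  fix x y assume "x \<in> {z. \<exists>a\<in>A. \<exists>b\<in>B. z \<sqsubseteq> a \<squnion> b}" "y \<in> {z. \<exists>a\<in>A. \<exists>b\<in>B. z \<sqsubseteq> a \<squnion> b}"
  then obtain a1 b1 a2 b2 where "a1 \<in> A" "b1 \<in> B" "x \<sqsubseteq> a1 \<squnion> b1" "a2 \<in> A" "b2 \<in> B" "y \<sqsubseteq> a2 \<squnion> b2"
    by blast
  moreover obtain c where "c \<in> A" "a1 \<sqsubseteq> c" "a2 \<sqsubseteq> c" using directed \<open>a1 \<in> A\<close> \<open>a2 \<in> A\<close> by blast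
  ultimately have "x \<squnion> y \<sqsubseteq> c \<squnion> (b1 \<squnion> b2)" "b1 \<squnion> b2 \<in> B"
    using B unfolding lattice_ideal_def
    by (auto intro: lat.sup_least lat.order.trans[OF _ lat.sup_mono] lat.le_supI2)
  then show "\<exists>a\<in>A. \<exists>b\<in>B. x \<squnion> y \<sqsubseteq> a \<squnion> b" using \<open>c \<in> A\<close> by blast
qed

lemma prime_ideal_separation:
  assumes "x \<noteq> y"
  obtains J where "prime_ideal L J" "x \<sqinter> y \<in> J" "x \<squnion> y \<notin> J"
proof -
  have "\<not> x \<squnion> y \<sqsubseteq> x \<sqinter> y"
  proof
    assume "x \<squnion> y \<sqsubseteq> x \<sqinter> y"
    then have "x \<sqsubseteq> y" "y \<sqsubseteq> x" by (simp_all add: lat.le_inf_iff lat.le_sup_iff)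
    then show False using assms lat.order.antisym by blast
  qed
  then have "{z. z \<sqsubseteq> x \<sqinter> y} \<inter> {z. x \<squnion> y \<sqsubseteq> z} = {}"
    using lat.order.trans by blast
  then show thesis
    using prime_ideal_extension[OF lattice_ideal_principal lattice_filter_principal] that by blast
qed

lemma prime_ideal_exists:
  assumes "\<bottom> \<noteq> \<top>" obtains J where "prime_ideal L J"
  using prime_ideal_separation[OF assms] by blast

context
  fixes J assumes J: "prime_ideal L J"
begin

lemma prime_bot: "\<bottom> \<in> J"
  and prime_top: "\<top> \<notin> J"
  and prime_down: "x \<in> J \<Longrightarrow> y \<sqsubseteq> x \<Longrightarrow> y \<in> J"
  using J unfolding prime_ideal_def by blast+

lemma prime_join_iff: "x \<squnion> y \<in> J \<longleftrightarrow> x \<in> J \<and> y \<in> J"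
  using J unfolding prime_ideal_def by (meson lat.sup_ge1 lat.sup_ge2)

lemma prime_meet_iff: "x \<sqinter> y \<in> J \<longleftrightarrow> x \<in> J \<or> y \<in> J"
  using J unfolding prime_ideal_def by (meson lat.inf_le1 lat.inf_le2)

lemma prime_pc: "x \<notin> J \<Longrightarrow> pc L x \<in> J"
  using prime_meet_iff[of x "pc L x"] prime_bot by simp

lemma prime_zeta: "prime_ideal L (zeta L J)"
  unfolding prime_ideal_def zeta_def
proof (intro conjI allI impI CollectI)
  show "neg L \<bottom> \<notin> J" "\<top> \<notin> {a. neg L a \<notin> J}" using prime_top prime_bot by simp_all
next
  fix x y assume "x \<in> {a. neg L a \<notin> J} \<and> y \<sqsubseteq> x"
  then show "neg L y \<notin> J" using prime_down neg_antimono by blast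
next
  fix x y assume "x \<in> {a. neg L a \<notin> J} \<and> y \<in> {a. neg L a \<notin> J}"
  then show "neg L (x \<squnion> y) \<notin> J" by (simp add: neg_join prime_meet_iff)
next
  fix x y assume "x \<sqinter> y \<in> {a. neg L a \<notin> J}"
  then show "x \<in> {a. neg L a \<notin> J} \<or> y \<in> {a. neg L a \<notin> J}"
    by (simp add: neg_meet prime_join_iff)
qed

text \<open>Since \<open>pc L a \<in> J\<close>, the filter generated by \<open>a\<close> and the complement of \<open>J\<close> avoids \<open>\<bottom>\<close>.\<close>
lemma prime_below_avoiding:
  assumes "pc L a \<in> J"
  obtains K where "prime_ideal L K" "K \<subseteq> J" "a \<notin> K"
proof -
  define F where "F = {x. \<exists>f. f \<notin> J \<and> f \<sqinter> a \<sqsubseteq> x}"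
  have "lattice_filter F" unfolding lattice_filter_def
  proof (intro conjI ballI allI impI)
    show "\<top> \<in> F" unfolding F_def using prime_top by (intro CollectI exI[of _ \<top>]) simp
  next
    fix x y assume "x \<in> F" "x \<sqsubseteq> y" then show "y \<in> F"
      unfolding F_def by (blast intro: lat.order.trans)
  next
    fix x y assume "x \<in> F" "y \<in> F"
    then obtain f1 f2 where "f1 \<notin> J" "f1 \<sqinter> a \<sqsubseteq> x" "f2 \<notin> J" "f2 \<sqinter> a \<sqsubseteq> y"
      unfolding F_def by blast
    moreover have "(f1 \<sqinter> f2) \<sqinter> a = (f1 \<sqinter> a) \<sqinter> (f2 \<sqinter> a)"
      by (simp add: lat.inf_aci)
    ultimately have "f1 \<sqinter> f2 \<notin> J" "(f1 \<sqinter> f2) \<sqinter> a \<sqsubseteq> x \<sqinter> y"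
      by (simp_all only: prime_meet_iff lat.inf_mono) simp
    then show "x \<sqinter> y \<in> F" unfolding F_def by blast
  qed
  moreover have "{z. z \<sqsubseteq> \<bottom>} \<inter> F = {}"
  proof -
    have False if "f \<notin> J" "f \<sqinter> a \<sqsubseteq> \<bottom>" for f
    proof -
      have "f \<sqsubseteq> pc L a" using that(2) by (simp add: le_pc_iff lat.bot_unique lat.inf_commute)
      then show False using prime_down[OF assms] that(1) by blast
    qed
    then show ?thesis unfolding F_def by (auto simp: lat.bot_unique)
  qed
  ultimately obtain K where K: "prime_ideal L K" "K \<inter> F = {}"
    using prime_ideal_extension[OF lattice_ideal_principal] by blast
  have "a \<in> F" "-J \<subseteq> F" unfolding F_def using prime_top by force+
  then show thesis using that K by blast
qed

end

lemma zeta_zeta [simp]: "zeta L (zeta L J) = J"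
  unfolding zeta_def by simp

lemma mem_zeta: "x \<in> zeta L J \<longleftrightarrow> neg L x \<notin> J"
  unfolding zeta_def by simp

lemma zeta_antimono: "K \<subseteq> J \<Longrightarrow> zeta L J \<subseteq> zeta L K"
  unfolding zeta_def by blast

context
  fixes \<theta> assumes \<theta>: "lattice_congruence \<theta>"
begin

lemma cong_bot_top_total:
  assumes "\<theta> \<bottom> \<top>" shows "\<theta> x y"
proof -
  have "\<theta> (z \<sqinter> \<bottom>) (z \<sqinter> \<top>)" for z using assms by (intro cong_meet[OF \<theta>] cong_refl[OF \<theta>])
  then have "\<theta> \<bottom> x" "\<theta> \<bottom> y" by simp_all
  then show ?thesis by (meson \<theta> cong_sym cong_trans)
qed

lemma saturated_prime_ideal_exists:
  assumes "\<not> \<theta> \<bottom> \<top>"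
  obtains J where "prime_ideal L J" "saturated \<theta> J"
proof -
  have "lattice_ideal {z. \<theta> z \<bottom>}" unfolding lattice_ideal_def
  proof (intro conjI ballI allI impI CollectI)
    show "\<theta> \<bottom> \<bottom>" by (rule cong_refl[OF \<theta>])
  next
    fix x y assume "x \<in> {z. \<theta> z \<bottom>}" "y \<sqsubseteq> x"
    then have "\<theta> (y \<sqinter> x) (y \<sqinter> \<bottom>)" by (intro cong_meet[OF \<theta>] cong_refl[OF \<theta>]) simp
    then show "\<theta> y \<bottom>" using \<open>y \<sqsubseteq> x\<close> by (simp add: lat.inf.absorb1)
  next
    fix x y assume "x \<in> {z. \<theta> z \<bottom>}" "y \<in> {z. \<theta> z \<bottom>}"
    then have "\<theta> (x \<squnion> y) (\<bottom> \<squnion> \<bottom>)" by (intro cong_join[OF \<theta>]) simp_all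
    then show "\<theta> (x \<squnion> y) \<bottom>" by simp
  qed
  moreover have "lattice_filter {z. \<theta> z \<top>}" unfolding lattice_filter_def
  proof (intro conjI ballI allI impI CollectI)
    show "\<theta> \<top> \<top>" by (rule cong_refl[OF \<theta>])
  next
    fix x y assume "x \<in> {z. \<theta> z \<top>}" "x \<sqsubseteq> y"
    then have "\<theta> (y \<squnion> x) (y \<squnion> \<top>)" by (intro cong_join[OF \<theta>] cong_refl[OF \<theta>]) simp
    then show "\<theta> y \<top>" using \<open>x \<sqsubseteq> y\<close> by (simp add: lat.sup.absorb1)
  next
    fix x y assume "x \<in> {z. \<theta> z \<top>}" "y \<in> {z. \<theta> z \<top>}"
    then have "\<theta> (x \<sqinter> y) (\<top> \<sqinter> \<top>)" by (intro cong_meet[OF \<theta>]) simp_all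
    then show "\<theta> (x \<sqinter> y) \<top>" by simp
  qed
  moreover have "{z. \<theta> z \<bottom>} \<inter> {z. \<theta> z \<top>} = {}"
  proof -
    have "\<theta> \<bottom> \<top>" if "\<theta> z \<bottom>" "\<theta> z \<top>" for z
      using that by (rule cong_trans[OF \<theta> cong_sym[OF \<theta>]])
    with assms show ?thesis by blast
  qed
  ultimately show thesis
    using saturated_prime_ideal_extension[OF \<theta> _ saturated_class[OF \<theta>] _ saturated_class[OF \<theta>]] that
    by blast
qed

lemma eq_if_primes_saturated:
  assumes saturated: "\<And>K. prime_ideal L K \<Longrightarrow> saturated \<theta> K" and "\<theta> x y"
  shows "x = y"
proof (rule ccontr)
  assume "x \<noteq> y"
  then obtain K where K: "prime_ideal L K" "x \<sqinter> y \<in> K" "x \<squnion> y \<notin> K"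
    by (rule prime_ideal_separation)
  have yx: "\<theta> y x" using \<open>\<theta> x y\<close> by (rule cong_sym[OF \<theta>])
  have "\<theta> (x \<sqinter> y) x" "\<theta> (x \<squnion> y) x"
    using cong_meet[OF \<theta> cong_refl[OF \<theta>, of x] yx] cong_join[OF \<theta> cong_refl[OF \<theta>, of x] yx]
    by simp_all
  then have "\<theta> (x \<sqinter> y) (x \<squnion> y)" by (rule cong_trans[OF \<theta> _ cong_sym[OF \<theta>]])
  then show False using saturated[OF K(1)] K(2,3) unfolding saturated_def by blast
qed

end

lemma saturated_zeta:
  assumes "congruence L \<theta>" "saturated \<theta> J"
  shows "saturated \<theta> (zeta L J)"
proof -
  have "\<theta> (neg L y) (neg L x)" if "\<theta> x y" for x y
  proof -
    have "\<theta> y x" using that by (rule cong_sym[OF lattice_congruence_if_congruence[OF assms(1)]])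
    then show ?thesis using assms(1) unfolding congruence_def by blast
  qed
  then show ?thesis using assms(2) unfolding saturated_def mem_zeta by blast
qed

text \<open>Under Priestley duality, such sets of prime ideals correspond to congruences.\<close>
lemma congruence_of_closed_primes:
  assumes prime: "\<And>J. J \<in> Y \<Longrightarrow> prime_ideal L J"
    and zeta_closed: "\<And>J. J \<in> Y \<Longrightarrow> zeta L J \<in> Y"
    and down_closed: "\<And>J K. J \<in> Y \<Longrightarrow> prime_ideal L K \<Longrightarrow> K \<subseteq> J \<Longrightarrow> K \<in> Y"
  shows "congruence L (\<lambda>x y. \<forall>J\<in>Y. x \<in> J \<longleftrightarrow> y \<in> J)"
  unfolding congruence_def
proof (intro conjI allI impI)
  show "equivp (\<lambda>x y. \<forall>J\<in>Y. x \<in> J \<longleftrightarrow> y \<in> J)"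
    by (rule equivpI) (auto simp: reflp_def symp_def transp_def)
  show "\<forall>J\<in>Y. x \<sqinter> u \<in> J \<longleftrightarrow> y \<sqinter> v \<in> J" "\<forall>J\<in>Y. x \<squnion> u \<in> J \<longleftrightarrow> y \<squnion> v \<in> J"
    if "(\<forall>J\<in>Y. x \<in> J \<longleftrightarrow> y \<in> J) \<and> (\<forall>J\<in>Y. u \<in> J \<longleftrightarrow> v \<in> J)" for x y u v
    using that prime_meet_iff[OF prime] prime_join_iff[OF prime] by auto
next
  fix x y assume xy: "\<forall>J\<in>Y. x \<in> J \<longleftrightarrow> y \<in> J"
  show "\<forall>J\<in>Y. neg L x \<in> J \<longleftrightarrow> neg L y \<in> J"
  proof
    fix J assume "J \<in> Y"
    then have "x \<in> zeta L J \<longleftrightarrow> y \<in> zeta L J" using xy zeta_closed by blast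
    then show "neg L x \<in> J \<longleftrightarrow> neg L y \<in> J" unfolding mem_zeta by blast
  qed
  have "pc L y \<in> J" if J: "J \<in> Y" "pc L x \<in> J" and xy: "\<forall>J\<in>Y. x \<in> J \<longleftrightarrow> y \<in> J"
    for J x y
  proof -
    obtain K where K: "prime_ideal L K" "K \<subseteq> J" "x \<notin> K"
      using prime_below_avoiding[OF prime[OF J(1)] J(2)] .
    then have "y \<notin> K" using xy down_closed[OF J(1) K(1,2)] by blast
    then show ?thesis using prime_pc[OF K(1)] K(2) by blast
  qed
  then show "\<forall>J\<in>Y. pc L x \<in> J \<longleftrightarrow> pc L y \<in> J" using xy by blast
qed

end

section \<open>Regular algebras\<close>

locale regular_pm_algebra = pm_algebra +
  assumes regular: "\<forall>x y. leq L (meet L x (neg L (pc L (neg L x)))) (join L y (pc L y))"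
begin

text \<open>Regularity forbids chains of three prime ideals: an element \<open>y \<in> J\<^sub>1 - J\<^sub>0\<close> gives
  \<open>y \<squnion> pc L y \<in> J\<^sub>1\<close>, while an element \<open>x \<in> J\<^sub>2 - J\<^sub>1\<close> gives \<open>x \<sqinter> neg L (pc L (neg L x)) \<notin> J\<^sub>1\<close>.\<close>
lemma no_prime_chain3:
  assumes "prime_ideal L J0" "prime_ideal L J1" "prime_ideal L J2" "J0 \<subset> J1" "J1 \<subset> J2"
  shows False
proof -
  obtain y where y: "y \<in> J1" "y \<notin> J0" using assms(4) by blast
  obtain x where x: "x \<in> J2" "x \<notin> J1" using assms(5) by blast
  have "pc L y \<in> J1" using prime_pc[OF assms(1) y(2)] assms(4) by blast
  then have "y \<squnion> pc L y \<in> J1" using y(1) prime_join_iff[OF assms(2)] by blast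
  moreover have "neg L (pc L (neg L x)) \<notin> J2"
    using x(1) join_neg_pc_neg[of x] prime_join_iff[OF assms(3)] prime_top[OF assms(3)] by metis
  then have "x \<sqinter> neg L (pc L (neg L x)) \<notin> J1"
    using x(2) assms(5) prime_meet_iff[OF assms(2)] by blast
  ultimately show False using regular prime_down[OF assms(2)] by blast
qed

text \<open>Suppose \<open>\<theta> x y\<close> with \<open>x \<in> K\<close> and \<open>y \<notin> K\<close>, and put \<open>u = x \<sqinter> y\<close>. Then \<open>pc L u \<notin> K\<close>,
  since otherwise a prime ideal below \<open>K\<close> avoids \<open>u\<close> and yields a chain of three prime ideals
  below \<open>J\<close>. Now \<open>y \<sqinter> pc L u \<notin> K\<close> is congruent to \<open>u \<sqinter> pc L u = \<bottom>\<close>, so its pseudocomplement is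
  congruent to \<open>\<top>\<close> and lies outside \<open>J \<supseteq> K\<close>, contradicting primeness of \<open>K\<close>.\<close>
lemma saturated_downward:
  assumes \<theta>: "congruence L \<theta>" and J: "prime_ideal L J" "saturated \<theta> J"
    and K: "prime_ideal L K" "K \<subseteq> J"
  shows "saturated \<theta> K"
  unfolding saturated_def
proof (intro allI impI)
  have lc: "lattice_congruence \<theta>" using \<theta> by (rule lattice_congruence_if_congruence)
  fix x y assume xy: "\<theta> x y" and "x \<in> K"
  show "y \<in> K"
  proof (rule ccontr)
    assume "y \<notin> K"
    let ?u = "x \<sqinter> y"
    have "?u \<in> K" using \<open>x \<in> K\<close> prime_meet_iff[OF K(1)] by blast
    have "\<theta> ?u y" using cong_meet[OF lc xy cong_refl[OF lc, of y]] by simp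
    have "pc L ?u \<notin> K"
    proof
      assume "pc L ?u \<in> K"
      then obtain K0 where "prime_ideal L K0" "K0 \<subseteq> K" "?u \<notin> K0"
        by (rule prime_below_avoiding[OF K(1)])
      moreover have "y \<in> J" using J(2) xy \<open>x \<in> K\<close> K(2) unfolding saturated_def by blast
      ultimately show False
        using no_prime_chain3[OF _ K(1) J(1)] \<open>?u \<in> K\<close> \<open>y \<notin> K\<close> K(2) by blast
    qed
    let ?v = "y \<sqinter> pc L ?u"
    have "\<theta> (?u \<sqinter> pc L ?u) ?v"
      using cong_meet[OF lc \<open>\<theta> ?u y\<close> cong_refl[OF lc, of "pc L ?u"]] .
    then have "\<theta> (pc L \<bottom>) (pc L ?v)" using \<theta> unfolding congruence_def by (metis meet_pc)
    then have "\<theta> (pc L ?v) \<top>" using cong_sym[OF lc] by simp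
    then have "pc L ?v \<notin> J" using J(2) prime_top[OF J(1)] unfolding saturated_def by blast
    moreover have "?v \<notin> K" using \<open>y \<notin> K\<close> \<open>pc L ?u \<notin> K\<close> prime_meet_iff[OF K(1)] by blast
    ultimately show False using prime_pc[OF K(1)] K(2) by blast
  qed
qed

lemma saturated_upward:
  assumes \<theta>: "congruence L \<theta>" and J: "prime_ideal L J" "saturated \<theta> J"
    and K: "prime_ideal L K" "J \<subseteq> K"
  shows "saturated \<theta> K"
proof -
  have "saturated \<theta> (zeta L K)"
    using saturated_downward[OF \<theta> prime_zeta[OF J(1)] saturated_zeta[OF \<theta> J(2)] prime_zeta[OF K(1)]]
      zeta_antimono[OF K(2)] by blast
  then show ?thesis using saturated_zeta[OF \<theta>] by fastforce
qed

lemma saturated_along_comparability: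
  assumes \<theta>: "congruence L \<theta>" and "(comparable_in (dual_space L))\<^sup>*\<^sup>* J K"
    and "prime_ideal L J" "saturated \<theta> J"
  shows "saturated \<theta> K"
  using assms(2)
proof (induction rule: rtranclp_induct)
  case base then show ?case using assms(4) .
next
  case (step K K')
  then have "prime_ideal L K" "prime_ideal L K'" "K \<subseteq> K' \<or> K' \<subseteq> K"
    unfolding comparable_in_def dual_space_def by auto
  then show ?case using saturated_upward[OF \<theta>] saturated_downward[OF \<theta>] step.IH by blast
qed

lemma all_primes_saturated:
  assumes Q: "order_component (dual_space L) Q" and cover: "dual_space L = Q \<union> zeta L ` Q"
    and \<theta>: "congruence L \<theta>" and J: "prime_ideal L J" "saturated \<theta> J"
    and K: "prime_ideal L K"
  shows "saturated \<theta> K"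
proof -
  have saturated_zeta_iff: "saturated \<theta> (zeta L I) \<longleftrightarrow> saturated \<theta> I" for I
    by (metis saturated_zeta[OF \<theta>] zeta_zeta)
  have in_Q: "\<exists>I'\<in>Q. I = I' \<or> I = zeta L I'" if "prime_ideal L I" for I
    using that cover unfolding dual_space_def by blast
  obtain J' K' where "J' \<in> Q" "K' \<in> Q" "saturated \<theta> J' \<longleftrightarrow> saturated \<theta> J"
    "saturated \<theta> K' \<longleftrightarrow> saturated \<theta> K"
    using in_Q[OF J(1)] in_Q[OF K] saturated_zeta_iff by metis
  moreover have "(comparable_in (dual_space L))\<^sup>*\<^sup>* J' K'" "prime_ideal L J'"
    using Q \<open>J' \<in> Q\<close> \<open>K' \<in> Q\<close> unfolding order_component_def path_connected_set_def dual_space_def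
    by blast+
  ultimately show ?thesis using saturated_along_comparability[OF \<theta>] J(2) by blast
qed

theorem simple_if_cover:
  assumes Q: "order_component (dual_space L) Q" and cover: "dual_space L = Q \<union> zeta L ` Q"
  shows "simple_alg L"
  unfolding simple_alg_def
proof (intro conjI allI impI)
  obtain J where "prime_ideal L J" using Q unfolding order_component_def dual_space_def by blast
  then have "\<bottom> \<noteq> \<top>" using prime_bot prime_top by metis
  then show "\<exists>x y::'a. x \<noteq> y" by blast
next
  fix \<theta> assume \<theta>: "congruence L \<theta>"
  then have lc: "lattice_congruence \<theta>" by (rule lattice_congruence_if_congruence)
  show "\<theta> = (=) \<or> \<theta> = (\<lambda>_ _. True)"
  proof (cases "\<theta> \<bottom> \<top>")
    case True
    then show ?thesis using cong_bot_top_total[OF lc] by blast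
  next
    case False
    then obtain J where J: "prime_ideal L J" "saturated \<theta> J"
      by (rule saturated_prime_ideal_exists[OF lc])
    have "\<theta> x y \<longleftrightarrow> x = y" for x y
      using eq_if_primes_saturated[OF lc all_primes_saturated[OF Q cover \<theta> J]] cong_refl[OF lc]
      by blast
    then show ?thesis by blast
  qed
qed

end

section \<open>Algebras of range \<open>n\<close>\<close>

locale pm_algebra_range = pm_algebra +
  fixes n :: nat
  assumes range: "\<forall>x. iter_np L n (meet L x (pc L (neg L x)))
                     = iter_np L (Suc n) (meet L x (pc L (neg L x)))"
begin

lemma iter_np_stable:
  assumes "n \<le> k"
  shows "iter_np L k s \<sqinter> iter_np L (Suc k) s = iter_np L (Suc k) s \<sqinter> iter_np L (Suc (Suc k)) s"
proof -
  have "iter_np L k (s \<sqinter> pc L (neg L s)) = iter_np L (Suc k) (s \<sqinter> pc L (neg L s))"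
    using assms
  proof (induction k rule: dec_induct)
    case base then show ?case using range by blast
  next
    case (step k) then show ?case by (metis iter_np_Suc)
  qed
  then show ?thesis by (simp add: iter_np_meet iter_np_Suc'[symmetric])
qed

definition iter_primes :: "'a set \<Rightarrow> nat \<Rightarrow> 'a set set" where
  "iter_primes I k = {J. prime_ideal L J \<and> iter_np L k ` I \<subseteq> J}"

lemma iter_primes_prime: "J \<in> iter_primes I k \<Longrightarrow> prime_ideal L J"
  unfolding iter_primes_def by blast

lemma self_in_iter_primes_0: "prime_ideal L I \<Longrightarrow> I \<in> iter_primes I 0"
  unfolding iter_primes_def by simp

lemma iter_primes_Suc_if_zeta_below:
  assumes J: "prime_ideal L J" and K: "K \<in> iter_primes I k" and "zeta L J \<subseteq> K"
  shows "J \<in> iter_primes I (Suc k)"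
  unfolding iter_primes_def
proof (intro CollectI conjI J image_subsetI)
  fix s assume "s \<in> I"
  let ?t = "iter_np L k s"
  have "?t \<in> K" and PK: "prime_ideal L K" using K \<open>s \<in> I\<close> unfolding iter_primes_def by auto
  then have "neg L (pc L (neg L ?t)) \<notin> K"
    using join_neg_pc_neg[of ?t] prime_join_iff[OF PK] prime_top[OF PK] by metis
  then have "neg L (pc L (neg L ?t)) \<notin> zeta L J" using \<open>zeta L J \<subseteq> K\<close> by blast
  then show "iter_np L (Suc k) s \<in> J" by (simp add: mem_zeta iter_np_Suc)
qed

lemma zeta_iter_primes: "J \<in> iter_primes I k \<Longrightarrow> zeta L J \<in> iter_primes I (Suc k)"
  by (simp add: iter_primes_Suc_if_zeta_below iter_primes_prime prime_zeta)

lemma iter_primes_down: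
  assumes "J \<in> iter_primes I k" "prime_ideal L K" "K \<subseteq> J"
  shows "K \<in> iter_primes I (Suc (Suc k))"
proof -
  have "zeta L K \<in> iter_primes I (Suc k)"
    using assms by (simp add: iter_primes_Suc_if_zeta_below prime_zeta)
  then show ?thesis using iter_primes_Suc_if_zeta_below[OF assms(2)] by blast
qed

text \<open>The witness is a prime ideal containing the ideal generated by \<open>zeta L J\<close> and the
  image of \<open>I\<close> under the \<open>k\<close>-th iterate; that ideal misses \<open>\<top>\<close> because \<open>J\<close> contains the
  \<open>Suc k\<close>-th iterate.\<close>
lemma iter_primes_Suc_zeta_below:
  assumes I: "prime_ideal L I" and J: "J \<in> iter_primes I (Suc k)"
  obtains K where "K \<in> iter_primes I k" "zeta L J \<subseteq> K"
proof -
  have PJ: "prime_ideal L J" using J by (rule iter_primes_prime)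
  have PZ: "prime_ideal L (zeta L J)" using prime_zeta[OF PJ] .
  define A where "A = {z. \<exists>a\<in>iter_np L k ` I. \<exists>j\<in>zeta L J. z \<sqsubseteq> a \<squnion> j}"
  have "lattice_ideal A" unfolding A_def
  proof (rule lattice_ideal_directed_join)
    show "iter_np L k ` I \<noteq> {}" using prime_bot[OF I] by blast
    show "\<exists>c\<in>iter_np L k ` I. a \<sqsubseteq> c \<and> b \<sqsubseteq> c"
      if ab: "a \<in> iter_np L k ` I" "b \<in> iter_np L k ` I" for a b
    proof -
      obtain s1 s2 where "s1 \<in> I" "s2 \<in> I" "a = iter_np L k s1" "b = iter_np L k s2"
        using ab by blast
      then show ?thesis using prime_join_iff[OF I, of s1 s2]
        by (intro bexI[of _ "iter_np L k (s1 \<squnion> s2)"]) (simp_all add: iter_np_mono)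
    qed
    show "lattice_ideal (zeta L J)" using PZ unfolding prime_ideal_def lattice_ideal_def by blast
  qed
  moreover have "A \<inter> {z. \<top> \<sqsubseteq> z} = {}"
  proof -
    have False if "s \<in> I" "j \<in> zeta L J" "iter_np L k s \<squnion> j = \<top>" for s j
    proof -
      have "neg L (iter_np L k s) \<sqinter> neg L j = \<bottom>"
        using that(3) neg_join[of "iter_np L k s" j] by simp
      then have "neg L j \<sqsubseteq> iter_np L (Suc k) s" by (simp add: le_pc_iff iter_np_Suc)
      moreover have "iter_np L (Suc k) s \<in> J" using J that(1) unfolding iter_primes_def by blast
      ultimately show False using prime_down[OF PJ] that(2) mem_zeta by blast
    qed
    then show ?thesis unfolding A_def by (auto simp: lat.top_unique)
  qed
  ultimately obtain K where K: "prime_ideal L K" "A \<subseteq> K"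
    using prime_ideal_extension[OF _ lattice_filter_principal] by blast
  have "iter_np L k ` I \<subseteq> A" unfolding A_def
    using prime_bot[OF PZ] by (blast intro: lat.sup_ge1)
  moreover have "zeta L J \<subseteq> A" unfolding A_def
    using prime_bot[OF I] by (blast intro: lat.sup_ge2)
  ultimately show thesis using K by (intro that[of K]) (auto simp: iter_primes_def)
qed

lemma not_in_iter_primes_witness:
  assumes I: "prime_ideal L I" and K: "prime_ideal L K"
    and "K \<notin> iter_primes I i" "K \<notin> iter_primes I j"
  obtains s where "s \<in> I" "iter_np L i s \<sqinter> iter_np L j s \<notin> K"
proof -
  obtain s1 s2 where s: "s1 \<in> I" "iter_np L i s1 \<notin> K" "s2 \<in> I" "iter_np L j s2 \<notin> K"
    using assms(3,4) K unfolding iter_primes_def by blast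
  have "iter_np L i s1 \<sqsubseteq> iter_np L i (s1 \<squnion> s2)" "iter_np L j s2 \<sqsubseteq> iter_np L j (s1 \<squnion> s2)"
    by (simp_all add: iter_np_mono)
  then have "iter_np L i (s1 \<squnion> s2) \<sqinter> iter_np L j (s1 \<squnion> s2) \<notin> K"
    using s prime_down[OF K] prime_meet_iff[OF K] by blast
  moreover have "s1 \<squnion> s2 \<in> I" using s prime_join_iff[OF I] by blast
  ultimately show thesis using that by blast
qed

lemma iter_primes_periodic:
  assumes I: "prime_ideal L I" and "n \<le> k" and J: "J \<in> iter_primes I (Suc (Suc k))"
  shows "J \<in> iter_primes I k \<union> iter_primes I (Suc k)"
proof (rule ccontr)
  assume "J \<notin> iter_primes I k \<union> iter_primes I (Suc k)"
  then obtain s where "s \<in> I" "iter_np L k s \<sqinter> iter_np L (Suc k) s \<notin> J"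
    using not_in_iter_primes_witness[OF I iter_primes_prime[OF J]] by blast
  moreover have "iter_np L (Suc (Suc k)) s \<in> J" using J \<open>s \<in> I\<close> unfolding iter_primes_def by blast
  ultimately show False
    using iter_np_stable[OF \<open>n \<le> k\<close>] prime_meet_iff[OF iter_primes_prime[OF J]] by metis
qed

definition stable_primes :: "'a set \<Rightarrow> 'a set set" where
  "stable_primes I = iter_primes I n \<union> iter_primes I (Suc n)"

context
  fixes I assumes I: "prime_ideal L I"
begin

lemma iter_primes_subset_stable_primes:
  assumes "n \<le> k" shows "iter_primes I k \<subseteq> stable_primes I"
proof -
  have "iter_primes I (n + d) \<subseteq> stable_primes I \<and> iter_primes I (n + Suc d) \<subseteq> stable_primes I"
    for d
  proof (induction d)
    case 0 show ?case by (simp add: stable_primes_def)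
  next
    case (Suc d)
    have "iter_primes I (n + Suc (Suc d)) \<subseteq> iter_primes I (n + d) \<union> iter_primes I (n + Suc d)"
      using iter_primes_periodic[OF I, of "n + d"] by auto
    with Suc.IH show ?case by auto
  qed
  moreover obtain d where "k = n + d" using assms le_Suc_ex by blast
  ultimately show ?thesis by blast
qed

lemma self_in_stable_primes: "I \<in> stable_primes I"
proof -
  have "I \<in> iter_primes I (2 * m)" for m
  proof (induction m)
    case 0 then show ?case using self_in_iter_primes_0[OF I] by simp
  next
    case (Suc m) then show ?case using zeta_iter_primes[OF zeta_iter_primes] by simp
  qed
  moreover have "n \<le> 2 * n" by simp
  ultimately show ?thesis using iter_primes_subset_stable_primes by blast
qed

lemma stable_primes_zeta:
  assumes "J \<in> stable_primes I" shows "zeta L J \<in> stable_primes I"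
proof -
  obtain k where "n \<le> k" "J \<in> iter_primes I k"
    using assms unfolding stable_primes_def by (metis UnE le_SucI order_refl)
  then show ?thesis using zeta_iter_primes iter_primes_subset_stable_primes[of "Suc k"] by auto
qed

lemma stable_primes_down:
  assumes "J \<in> stable_primes I" "prime_ideal L K" "K \<subseteq> J"
  shows "K \<in> stable_primes I"
proof -
  obtain k where "n \<le> k" "J \<in> iter_primes I k"
    using assms(1) unfolding stable_primes_def by (metis UnE le_SucI order_refl)
  then show ?thesis
    using iter_primes_down[OF _ assms(2,3)] iter_primes_subset_stable_primes[of "Suc (Suc k)"]
    by auto
qed

text \<open>In a simple algebra the congruence induced by \<open>stable_primes I\<close> is the identity,
  and an element lying in every stable prime but outside \<open>K\<close> would contradict this.\<close>
lemma simple_stable_primes_all: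
  assumes "simple_alg L" and K: "prime_ideal L K"
  shows "K \<in> stable_primes I"
proof (rule ccontr)
  assume "K \<notin> stable_primes I"
  then obtain s where "s \<in> I" and a: "iter_np L n s \<sqinter> iter_np L (Suc n) s \<notin> K"
    using not_in_iter_primes_witness[OF I K] unfolding stable_primes_def by blast
  let ?\<theta> = "\<lambda>x y. \<forall>J\<in>stable_primes I. x \<in> J \<longleftrightarrow> y \<in> J"
  have prime: "\<And>J. J \<in> stable_primes I \<Longrightarrow> prime_ideal L J"
    unfolding stable_primes_def using iter_primes_prime by blast
  have "congruence L ?\<theta>"
    using prime stable_primes_zeta stable_primes_down by (rule congruence_of_closed_primes)
  moreover have "\<not> ?\<theta> \<bottom> \<top>" using self_in_stable_primes prime_bot[OF I] prime_top[OF I] by blast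
  then have "?\<theta> \<noteq> (\<lambda>_ _. True)" by metis
  ultimately have \<theta>_eq: "?\<theta> = (=)" using assms(1) unfolding simple_alg_def by blast
  let ?a = "iter_np L n s \<sqinter> iter_np L (Suc n) s"
  have "?\<theta> ?a \<bottom>"
  proof
    fix J assume "J \<in> stable_primes I"
    then have "iter_np L n s \<in> J \<or> iter_np L (Suc n) s \<in> J"
      using \<open>s \<in> I\<close> unfolding stable_primes_def iter_primes_def by blast
    then show "?a \<in> J \<longleftrightarrow> \<bottom> \<in> J"
      using prime[OF \<open>J \<in> stable_primes I\<close>] prime_meet_iff prime_bot by blast
  qed
  then have "?a = \<bottom>" using fun_cong[OF fun_cong[OF \<theta>_eq, of ?a], of \<bottom>] by simp
  then show False using a prime_bot[OF K] by simp
qed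

lemma iter_primes_connected:
  "J \<in> iter_primes I k \<Longrightarrow>
    (comparable_in (dual_space L))\<^sup>*\<^sup>* I (if even k then J else zeta L J)"
proof (induction k arbitrary: J)
  case 0
  then show ?case using I unfolding iter_primes_def comparable_in_def dual_space_def by auto
next
  case (Suc k)
  obtain K where K: "K \<in> iter_primes I k" "zeta L J \<subseteq> K"
    using iter_primes_Suc_zeta_below[OF I Suc.prems] by blast
  have "prime_ideal L K" "prime_ideal L J" using K(1) Suc.prems by (simp_all add: iter_primes_prime)
  moreover have "zeta L K \<subseteq> J" using zeta_antimono[OF K(2)] by simp
  ultimately have "comparable_in (dual_space L) (if even k then K else zeta L K)
      (if even (Suc k) then J else zeta L J)"
    using K(2) prime_zeta unfolding comparable_in_def dual_space_def by auto
  with Suc.IH[OF K(1)] show ?case by (rule rtranclp.rtrancl_into_rtrancl)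
qed

end

theorem simple_only_if_cover:
  assumes simple: "simple_alg L"
  shows "\<exists>Q. order_component (dual_space L) Q \<and> dual_space L = Q \<union> zeta L ` Q"
proof -
  have "\<bottom> \<noteq> \<top>"
    using simple unfolding simple_alg_def by (metis lat.inf_top_right lat.inf_bot_right)
  then obtain I where I: "prime_ideal L I" by (rule prime_ideal_exists)
  define Q where "Q = {K. (comparable_in (dual_space L))\<^sup>*\<^sup>* I K}"
  have "order_component (dual_space L) Q"
    unfolding Q_def using I by (simp add: order_component_of dual_space_def)
  then have "Q \<subseteq> dual_space L" unfolding order_component_def by blast
  moreover have "zeta L ` dual_space L \<subseteq> dual_space L"
    unfolding dual_space_def using prime_zeta by blast
  moreover have "K \<in> Q \<union> zeta L ` Q" if K: "prime_ideal L K" for K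
  proof -
    obtain k where "K \<in> iter_primes I k"
      using simple_stable_primes_all[OF I simple K] unfolding stable_primes_def by blast
    from iter_primes_connected[OF I this] show ?thesis
      unfolding Q_def by (cases "even k") (auto intro: image_eqI[of _ _ "zeta L K"])
  qed
  ultimately show ?thesis using \<open>order_component (dual_space L) Q\<close>
    unfolding dual_space_def by blast
qed

end

theorem theorem4p2:
  fixes n :: nat and L :: "'a pmalg"
  assumes "in_M n L"
  shows "simple_alg L \<longleftrightarrow>
    (\<exists>Q. order_component (dual_space L) Q \<and>
         dual_space L = Q \<union> zeta L ` Q)"
proof -
  interpret regular_pm_algebra L
    using assms unfolding in_M_def by unfold_locales blast+
  interpret pm_algebra_range L n
    using assms unfolding in_M_def by unfold_locales blast
  show ?thesis using simple_if_cover simple_only_if_cover by blast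
qed

end
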